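(* Let $K\ge2$. The capacity region of the $K$-receiver combination network with nested messages $M_{\overline{K}}$ (required by receivers $[1:K-1]$) and $M_{[1:K]}$ (required by all receivers) is the set of rate pairs $(R_{\overline{K}},R_{[1:K]})$ with $R_{[1:K]}\le C_{\mathsf{W}_K^{\mathsf{P}}}$ and $R_{[1:K]}+R_{\overline{K}}\le C_{\mathsf{W}_j^{\mathsf{P}}}$ for all $j\in[1:K-1]$.
   Context: The $K$-receiver combination network with capacities $C_S\ge0$, $S\in\mathsf{P}$ ($\mathsf{P}$ = nonempty subsets of $[1:K]$): deterministic broadcast channel with input $X=(V_S:S\in\mathsf{P})$, $|\mathcal{V}_S|=2^{C_S}$, and outputs $Y_i=(V_S:S\in\mathsf{W}_i^{\mathsf{P}})$ where $\mathsf{W}_i^{\mathsf{P}}=\{T\in\mathsf{P}:i\in T\}$. Messages independent, each required by the indicated receivers; achievability and capacity region as usual. $C_{\mathsf{W}}=\sum_{S\in\mathsf{W}}C_S$; $\overline{K}$ denotes $[1:K]\setminus\{K\}$. *)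

theory Defs
  imports "HOL-Analysis.Analysis"
begin

text \<open>Receivers are 1..K, links are indexed by
the nonempty subsets S of {1..K}. Link S carries one symbol of an alphabet of size
2 powr C S per channel use; over a block of n channel uses it therefore carries one
symbol from an alphabet of size (2 powr C S)^n, encoded as a natural number below that.\<close>

definition links :: "nat \<Rightarrow> nat set set" where
  "links K = {S. S \<subseteq> {1..K} \<and> S \<noteq> {}}"

definition W :: "nat \<Rightarrow> nat \<Rightarrow> nat set set" where
  "W K i = {T \<in> links K. i \<in> T}"

definition capW :: "(nat set \<Rightarrow> real) \<Rightarrow> nat set set \<Rightarrow> real" where
  "capW C Ws = (\<Sum>S\<in>Ws. C S)"

definition blk_alph :: "(nat set \<Rightarrow> real) \<Rightarrow> nat \<Rightarrow> nat set \<Rightarrow> nat" where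
  "blk_alph C n S = nat \<lfloor>2 powr C S\<rfloor> ^ n"

definition msg_size :: "nat \<Rightarrow> real \<Rightarrow> nat" where
  "msg_size n R = nat \<lceil>2 powr (real n * R)\<rceil>"

definition rx_out :: "nat \<Rightarrow> (nat set \<Rightarrow> nat \<Rightarrow> nat \<Rightarrow> nat) \<Rightarrow> nat \<Rightarrow> nat \<Rightarrow> nat \<Rightarrow> (nat set \<Rightarrow> nat)" where
  "rx_out K enc j a b = (\<lambda>S. if S \<in> W K j then enc S a b else 0)"

text \<open>A code of block length n for the nested message set: message a (=M_{Kbar}, wanted by
receivers 1..K-1) ranges over {0..<m1}, message b (=M_{[1:K]}, wanted by everyone) over {0..<m2}.
enc S a b is the block transmitted on link S. dec j maps receiver j's output to an estimate
(a', b'); receiver K only uses the second component.\<close>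
definition valid_encoder :: "nat \<Rightarrow> (nat set \<Rightarrow> real) \<Rightarrow> nat \<Rightarrow> nat \<Rightarrow> nat \<Rightarrow> (nat set \<Rightarrow> nat \<Rightarrow> nat \<Rightarrow> nat) \<Rightarrow> bool" where
  "valid_encoder K C n m1 m2 enc \<longleftrightarrow>
     (\<forall>S\<in>links K. \<forall>a<m1. \<forall>b<m2. enc S a b < blk_alph C n S)"

definition error_event :: "nat \<Rightarrow> (nat set \<Rightarrow> nat \<Rightarrow> nat \<Rightarrow> nat) \<Rightarrow> (nat \<Rightarrow> (nat set \<Rightarrow> nat) \<Rightarrow> nat \<times> nat) \<Rightarrow> nat \<Rightarrow> nat \<Rightarrow> bool" where
  "error_event K enc dec a b \<longleftrightarrow>
     (\<exists>j\<in>{1..<K}. dec j (rx_out K enc j a b) \<noteq> (a, b)) \<or> snd (dec K (rx_out K enc K a b)) \<noteq> b"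

definition error_prob :: "nat \<Rightarrow> nat \<Rightarrow> nat \<Rightarrow> (nat set \<Rightarrow> nat \<Rightarrow> nat \<Rightarrow> nat) \<Rightarrow> (nat \<Rightarrow> (nat set \<Rightarrow> nat) \<Rightarrow> nat \<times> nat) \<Rightarrow> real" where
  "error_prob K m1 m2 enc dec =
     real (card {(a, b). a < m1 \<and> b < m2 \<and> error_event K enc dec a b}) / (real m1 * real m2)"

text \<open>(R1, R2) = (R_{Kbar}, R_{[1:K]}) is achievable if both rates are nonnegative and there is a
sequence of (2^{nR1}, 2^{nR2}, n) codes whose error probability tends to 0.\<close>
definition achievable :: "nat \<Rightarrow> (nat set \<Rightarrow> real) \<Rightarrow> real \<times> real \<Rightarrow> bool" where
  "achievable K C R \<longleftrightarrow> fst R \<ge> 0 \<and> snd R \<ge> 0 \<and>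
     (\<exists>Pe :: nat \<Rightarrow> real. Pe \<longlonglongrightarrow> 0 \<and>
        (\<forall>n. \<exists>enc dec. valid_encoder K C n (msg_size n (fst R)) (msg_size n (snd R)) enc \<and>
             error_prob K (msg_size n (fst R)) (msg_size n (snd R)) enc dec \<le> Pe n))"

definition capacity_region :: "nat \<Rightarrow> (nat set \<Rightarrow> real) \<Rightarrow> (real \<times> real) set" where
  "capacity_region K C = closure {R. achievable K C R}"

end

theory Submission
  imports Defs
begin

(* Receiver j observes only the links in W_j, so over a block of length n its output
   takes at most 2^(n C(W_j)) values. A decoder that is correct on a set G of message pairs is
   injective on G, hence the error probability is at least 1 - 2^(n C(W_j)) / (number of message
   pairs); vanishing error forces R_Kbar + R_[1:K] <= C(W_j). For receiver K the same count, done
   for each fixed private message, gives R_[1:K] <= C(W_K).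

   Achievability, by superposition coding with binning, built greedily instead of randomly. The
   private rate is split as r1 + r2. Cloud centres indexed by the common message and the r1-part
   are words on all links, any two of which differ on W_K, so receiver K decodes the centre. A
   receiver j < K sees a centre only through W_j \<inter> W_K; the centres are divided into bins by
   their index modulo L_j so that centres in one bin differ there. The codewords (satellites)
   agree with their centre on W_K and are chosen such that any two whose centres look alike on
   W_j \<inter> W_K differ on W_j - W_K. Each greedy step succeeds as long as fewer words are
   forbidden than are available; for t times a point of the region, t < 1, this holds for all
   large n, and the region is the closure of these scaled points. *)

section \<open>Words and greedy choice\<close>

definition agree_on :: "'a set \<Rightarrow> ('a \<Rightarrow> 'b) \<Rightarrow> ('a \<Rightarrow> 'b) \<Rightarrow> bool" where
  "agree_on T x y \<longleftrightarrow> (\<forall>i\<in>T. x i = y i)"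

definition words :: "'a set \<Rightarrow> ('a \<Rightarrow> nat) \<Rightarrow> ('a \<Rightarrow> nat) set" where
  "words I q = (\<Pi>\<^sub>E i\<in>I. {..<q i})"

definition words_agreeing :: "'a set \<Rightarrow> ('a \<Rightarrow> nat) \<Rightarrow> 'a set \<Rightarrow> ('a \<Rightarrow> nat) \<Rightarrow> ('a \<Rightarrow> nat) set" where
  "words_agreeing I q T y = {x \<in> words I q. agree_on T x y}"

lemma agree_on_sym: "agree_on T x y \<longleftrightarrow> agree_on T y x"
  unfolding agree_on_def by auto

lemma finite_words: "finite I \<Longrightarrow> finite (words I q)"
  unfolding words_def by (simp add: finite_PiE)

lemma card_words: "finite I \<Longrightarrow> card (words I q) = prod q I"
  unfolding words_def by (simp add: card_PiE)

lemma finite_words_agreeing: "finite I \<Longrightarrow> finite (words_agreeing I q T y)"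
  unfolding words_agreeing_def by (simp add: finite_words)

lemma card_words_agreeing_le:
  assumes "finite I"
  shows "card (words_agreeing I q T y) \<le> prod q (I - T)"
proof -
  have "inj_on (\<lambda>x. restrict x (I - T)) (words_agreeing I q T y)"
  proof (rule inj_onI)
    fix x z assume x: "x \<in> words_agreeing I q T y" and z: "z \<in> words_agreeing I q T y"
      and eq: "restrict x (I - T) = restrict z (I - T)"
    have "x i = z i" if "i \<in> I" for i
    proof (cases "i \<in> T")
      case True
      then show ?thesis using x z by (simp add: words_agreeing_def agree_on_def)
    next
      case False
      then show ?thesis using fun_cong[OF eq, of i] that by simp
    qed
    then show "x = z"
      using x z unfolding words_agreeing_def words_def by (auto intro: PiE_ext)
  qed
  moreover have "(\<lambda>x. restrict x (I - T)) ` words_agreeing I q T y \<subseteq> words (I - T) q"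
    unfolding words_agreeing_def words_def by auto
  ultimately have "card (words_agreeing I q T y) \<le> card (words (I - T) q)"
    using assms by (intro card_inj_on_le) (auto intro: finite_words)
  then show ?thesis using assms by (simp add: card_words)
qed

lemma card_words_agreeing:
  assumes "finite I" "T \<subseteq> I" "\<forall>i\<in>T. y i < q i"
  shows "card (words_agreeing I q T y) = prod q (I - T)"
proof (rule antisym[OF card_words_agreeing_le[OF assms(1)]])
  let ?merge = "\<lambda>z i. if i \<in> T then y i else z i"
  have "inj_on ?merge (words (I - T) q)"
  proof (rule inj_onI)
    fix z z' assume z: "z \<in> words (I - T) q" and z': "z' \<in> words (I - T) q"
      and eq: "?merge z = ?merge z'"
    have "z i = z' i" if "i \<in> I - T" for i
      using fun_cong[OF eq, of i] that by simp
    then show "z = z'" using z z' unfolding words_def by (auto intro: PiE_ext)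
  qed
  moreover have "?merge z \<in> words_agreeing I q T y" if z: "z \<in> words (I - T) q" for z
  proof -
    have "?merge z \<in> words I q"
      using assms(2,3) z unfolding words_def PiE_def extensional_def by auto
    then show ?thesis unfolding words_agreeing_def agree_on_def by simp
  qed
  ultimately have "card (words (I - T) q) \<le> card (words_agreeing I q T y)"
    using assms(1) by (intro card_inj_on_le) (auto intro: finite_words_agreeing)
  then show "prod q (I - T) \<le> card (words_agreeing I q T y)"
    using assms by (simp add: card_words)
qed

lemma card_words_agreeing_both_le:
  assumes "finite I"
  shows "card {x \<in> words_agreeing I q U y. agree_on T x z} \<le> prod q (I - (U \<union> T))"
proof -
  have "{x \<in> words_agreeing I q U y. agree_on T x z}
      \<subseteq> words_agreeing I q (U \<union> T) (\<lambda>a. if a \<in> U then y a else z a)"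
    unfolding words_agreeing_def agree_on_def by auto
  then have "card {x \<in> words_agreeing I q U y. agree_on T x z}
      \<le> card (words_agreeing I q (U \<union> T) (\<lambda>a. if a \<in> U then y a else z a))"
    by (rule card_mono[OF finite_words_agreeing[OF assms]])
  also have "\<dots> \<le> prod q (I - (U \<union> T))" by (rule card_words_agreeing_le[OF assms])
  finally show ?thesis .
qed

lemma greedy_sequence_exists:
  fixes Allowed :: "nat \<Rightarrow> 'a set" and Forbidden :: "nat \<Rightarrow> (nat \<Rightarrow> 'a) \<Rightarrow> 'a set"
  assumes local: "\<And>i f g. (\<And>k. k < i \<Longrightarrow> f k = g k) \<Longrightarrow> Forbidden i f = Forbidden i g"
    and few: "\<And>i f. i < N \<Longrightarrow> finite (Forbidden i f) \<and> card (Forbidden i f) < card (Allowed i)"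
  shows "\<exists>f. \<forall>i<N. f i \<in> Allowed i - Forbidden i f"
  using few
proof (induction N)
  case 0
  then show ?case by simp
next
  case (Suc N)
  obtain f where f: "\<forall>i<N. f i \<in> Allowed i - Forbidden i f"
    using Suc.IH Suc.prems by (meson less_SucI)
  have "\<not> Allowed N \<subseteq> Forbidden N f"
    using Suc.prems[of N f] by (auto dest: card_mono)
  then obtain x where x: "x \<in> Allowed N - Forbidden N f" by blast
  have "(f(N := x)) i \<in> Allowed i - Forbidden i (f(N := x))" if "i < Suc N" for i
  proof -
    have "Forbidden i (f(N := x)) = Forbidden i f"
      using that by (intro local) simp
    then show ?thesis using f x that by (cases "i = N") simp_all
  qed
  then show ?case by (intro exI[of _ "f(N := x)"]) blast
qed

lemma card_UN_le_mult:
  assumes "finite A" "\<And>a. a \<in> A \<Longrightarrow> card (B a) \<le> c"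
  shows "card (\<Union>a\<in>A. B a) \<le> card A * c"
  using card_UN_le[OF assms(1), of B] sum_bounded_above[of A "\<lambda>a. card (B a)" c] assms(2)
  by simp

lemma greedy_words_exist:
  fixes c :: "nat \<Rightarrow> 'a \<Rightarrow> nat" and T :: "'j \<Rightarrow> 'a set" and Clash :: "'j \<Rightarrow> nat \<Rightarrow> nat set"
  assumes I: "finite I" "U \<subseteq> I" and J: "finite J"
    and c: "\<And>i a. i < N \<Longrightarrow> a \<in> U \<Longrightarrow> c i a < q a"
    and Clash: "\<And>j i. Clash j i \<subseteq> {..<i}"
    and few: "\<And>i. i < N \<Longrightarrow> (\<Sum>j\<in>J. card (Clash j i) * prod q (I - (U \<union> T j))) < prod q (I - U)"
  shows "\<exists>f. \<forall>i<N. f i \<in> words_agreeing I q U (c i) \<and>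
    (\<forall>j\<in>J. \<forall>i'\<in>Clash j i. \<not> agree_on (T j) (f i) (f i'))"
proof -
  define Forbidden where "Forbidden i f = (\<Union>j\<in>J. \<Union>i'\<in>Clash j i.
      {x \<in> words_agreeing I q U (c i). agree_on (T j) x (f i')})" for i and f :: "nat \<Rightarrow> 'a \<Rightarrow> nat"
  have "\<exists>f. \<forall>i<N. f i \<in> words_agreeing I q U (c i) - Forbidden i f"
  proof (rule greedy_sequence_exists)
    fix i and f g :: "nat \<Rightarrow> 'a \<Rightarrow> nat" assume prefix: "\<And>i'. i' < i \<Longrightarrow> f i' = g i'"
    show "Forbidden i f = Forbidden i g"
      unfolding Forbidden_def
    proof (intro SUP_cong refl)
      fix j i' assume "i' \<in> Clash j i"
      then have "f i' = g i'" using prefix Clash by blast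
      then show "{x \<in> words_agreeing I q U (c i). agree_on (T j) x (f i')} =
          {x \<in> words_agreeing I q U (c i). agree_on (T j) x (g i')}" by (simp only:)
    qed
  next
    fix i and f :: "nat \<Rightarrow> 'a \<Rightarrow> nat" assume i: "i < N"
    have "card {x \<in> words_agreeing I q U (c i). agree_on (T j) x (f i')} \<le> prod q (I - (U \<union> T j))"
      for j i' by (rule card_words_agreeing_both_le[OF I(1)])
    then have "card (Forbidden i f) \<le> (\<Sum>j\<in>J. card (Clash j i) * prod q (I - (U \<union> T j)))"
      unfolding Forbidden_def using finite_subset[OF Clash]
      by (intro order_trans[OF card_UN_le[OF J]] sum_mono card_UN_le_mult) auto
    also have "\<dots> < card (words_agreeing I q U (c i))"
      using few[OF i] card_words_agreeing[OF I] c[OF i] by simp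
    finally show "finite (Forbidden i f) \<and> card (Forbidden i f) < card (words_agreeing I q U (c i))"
      using finite_words_agreeing[OF I(1)] unfolding Forbidden_def by (auto intro: finite_subset)
  qed
  then obtain f where f: "\<forall>i<N. f i \<in> words_agreeing I q U (c i) - Forbidden i f" ..
  have "\<not> agree_on (T j) (f i) (f i')" if "i < N" "j \<in> J" "i' \<in> Clash j i" for i j i'
  proof
    assume "agree_on (T j) (f i) (f i')"
    then have "f i \<in> Forbidden i f" using f that unfolding Forbidden_def by auto
    then show False using f that by blast
  qed
  then show ?thesis using f by blast
qed

section \<open>Superposition codes with binning\<close>

lemma card_less_same_mod_le:
  fixes k L :: nat
  shows "card {k'. k' < k \<and> k' mod L = k mod L} \<le> k div L"
proof -
  have "{k'. k' < k \<and> k' mod L = k mod L} \<subseteq> (\<lambda>i. k mod L + L * i) ` {..<k div L}"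
  proof
    fix k' assume "k' \<in> {k'. k' < k \<and> k' mod L = k mod L}"
    then have lt: "k' < k" and eq: "k' mod L = k mod L" by auto
    have k': "k' = k mod L + L * (k' div L)" and k: "k = k mod L + L * (k div L)"
      using eq by (metis mod_mult_div_eq add.commute mult.commute)+
    then have "k' div L < k div L" using lt by (metis add_less_cancel_left mult_less_cancel1)
    then show "k' \<in> (\<lambda>i. k mod L + L * i) ` {..<k div L}" using k' by blast
  qed
  then have "card {k'. k' < k \<and> k' mod L = k mod L} \<le> card ((\<lambda>i. k mod L + L * i) ` {..<k div L})"
    by (intro card_mono) auto
  also have "\<dots> \<le> k div L"
    using card_image_le[of "{..<k div L}"] by simp
  finally show ?thesis .
qed

lemma binned_words_exist:
  fixes q :: "'a \<Rightarrow> nat" and T :: "'j \<Rightarrow> 'a set" and L :: "'j \<Rightarrow> nat"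
  assumes I: "finite I" and J: "finite J"
    and few: "(\<Sum>j\<in>J. ((N - 1) div L j) * prod q (I - T j)) < prod q I"
  shows "\<exists>u. (\<forall>k<N. u k \<in> words I q) \<and>
    (\<forall>j\<in>J. \<forall>k<N. \<forall>k'<N. k mod L j = k' mod L j \<longrightarrow> agree_on (T j) (u k) (u k') \<longrightarrow> k = k')"
proof -
  define Same where "Same j k = {k'. k' < k \<and> k' mod L j = k mod L j}" for j k
  have "\<exists>u. \<forall>k<N. u k \<in> words_agreeing I q {} (\<lambda>_. 0) \<and>
      (\<forall>j\<in>J. \<forall>k'\<in>Same j k. \<not> agree_on (T j) (u k) (u k'))"
  proof (rule greedy_words_exist[OF I(1) _ J])
    fix k assume k: "k < N"
    have "card (Same j k) \<le> (N - 1) div L j" for j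
      using card_less_same_mod_le[of k "L j"] div_le_mono[of k "N - 1" "L j"] k
      unfolding Same_def by linarith
    then have "(\<Sum>j\<in>J. card (Same j k) * prod q (I - ({} \<union> T j)))
        \<le> (\<Sum>j\<in>J. ((N - 1) div L j) * prod q (I - T j))"
      by (intro sum_mono mult_right_mono) auto
    then show "(\<Sum>j\<in>J. card (Same j k) * prod q (I - ({} \<union> T j))) < prod q (I - {})"
      using few by simp
  qed (auto simp: Same_def)
  then obtain u where u: "\<forall>k<N. u k \<in> words_agreeing I q {} (\<lambda>_. 0) \<and>
      (\<forall>j\<in>J. \<forall>k'\<in>Same j k. \<not> agree_on (T j) (u k) (u k'))" ..
  have earlier: "\<not> agree_on (T j) (u k) (u k')"
    if "j \<in> J" "k < N" "k' < k" "k' mod L j = k mod L j" for j k k'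
    using u that unfolding Same_def by auto
  show ?thesis
  proof (intro exI[of _ u] conjI allI impI ballI)
    show "u k \<in> words I q" if "k < N" for k using u that unfolding words_agreeing_def by auto
  next
    fix j k k' assume "j \<in> J" "k < N" "k' < N" "k mod L j = k' mod L j" "agree_on (T j) (u k) (u k')"
    then show "k = k'"
      using earlier[of j k k'] earlier[of j k' k] agree_on_sym
      by (cases k k' rule: linorder_cases) auto
  qed
qed

lemma superposition_words_exist:
  fixes c :: "nat \<Rightarrow> 'a \<Rightarrow> nat" and V :: "'j \<Rightarrow> 'a set" and D :: "'j \<Rightarrow> nat"
  assumes I: "finite I" "U \<subseteq> I" and J: "finite J"
    and c: "\<forall>i<M. c i \<in> words I q"
    and D: "\<forall>j\<in>J. \<forall>i<M. card {i'. i' < M \<and> agree_on (V j \<inter> U) (c i') (c i)} \<le> D j"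
    and few: "(\<Sum>j\<in>J. (D j - 1) * prod q (I - (U \<union> V j))) < prod q (I - U)"
  shows "\<exists>f. (\<forall>i<M. f i \<in> words_agreeing I q U (c i)) \<and>
    (\<forall>j\<in>J. \<forall>i<M. \<forall>i'<M. agree_on (V j) (f i) (f i') \<longrightarrow> i = i')"
proof -
  define Clash where "Clash j i = {i'. i' < i \<and> agree_on (V j \<inter> U) (c i') (c i)}" for j i
  have "\<exists>f. \<forall>i<M. f i \<in> words_agreeing I q U (c i) \<and> (\<forall>j\<in>J. \<forall>i'\<in>Clash j i. \<not> agree_on (V j) (f i) (f i'))"
  proof (rule greedy_words_exist[OF I J])
    fix i assume i: "i < M"
    have "card (Clash j i) \<le> D j - 1" if "j \<in> J" for j
    proof -
      let ?S = "{i'. i' < M \<and> agree_on (V j \<inter> U) (c i') (c i)}"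
      have "i \<in> ?S" using i by (simp add: agree_on_def)
      have "Clash j i \<subseteq> ?S - {i}" using i unfolding Clash_def by auto
      then have "card (Clash j i) \<le> card (?S - {i})" by (intro card_mono) auto
      also have "\<dots> = card ?S - 1" using \<open>i \<in> ?S\<close> by simp
      also have "\<dots> \<le> D j - 1" using D that i by (simp add: diff_le_mono)
      finally show ?thesis .
    qed
    then have "(\<Sum>j\<in>J. card (Clash j i) * prod q (I - (U \<union> V j))) \<le> (\<Sum>j\<in>J. (D j - 1) * prod q (I - (U \<union> V j)))"
      by (intro sum_mono mult_right_mono) auto
    with few show "(\<Sum>j\<in>J. card (Clash j i) * prod q (I - (U \<union> V j))) < prod q (I - U)" by linarith
  qed (use c I(2) in \<open>auto simp: Clash_def words_def dest: PiE_mem\<close>)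
  then obtain f where f: "\<forall>i<M. f i \<in> words_agreeing I q U (c i) \<and>
      (\<forall>j\<in>J. \<forall>i'\<in>Clash j i. \<not> agree_on (V j) (f i) (f i'))" ..
  have earlier: "\<not> agree_on (V j) (f i) (f i')" if "j \<in> J" "i < M" "i' < i" for j i i'
  proof
    assume agree: "agree_on (V j) (f i) (f i')"
    moreover have "agree_on U (f i) (c i)" "agree_on U (f i') (c i')"
      using f that unfolding words_agreeing_def by auto
    ultimately have "i' \<in> Clash j i"
      using that unfolding Clash_def agree_on_def by auto
    with agree show False using f that by blast
  qed
  show ?thesis
  proof (intro exI[of _ f] conjI allI impI ballI)
    show "f i \<in> words_agreeing I q U (c i)" if "i < M" for i using f that by blast
  next
    fix j i i' assume "j \<in> J" "i < M" "i' < M" "agree_on (V j) (f i) (f i')"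
    then show "i = i'"
      using earlier[of j i i'] earlier[of j i' i] agree_on_sym
      by (cases i i' rule: linorder_cases) auto
  qed
qed

lemma binned_centers_exist:
  fixes q :: "'a \<Rightarrow> nat" and T :: "'j \<Rightarrow> 'a set" and L :: "'j \<Rightarrow> nat"
  assumes I: "finite I" and J: "finite J"
    and few: "(N - 1) * prod q (I - U) + (\<Sum>j\<in>J. ((N - 1) div L j) * prod q (I - T j)) < prod q I"
  shows "\<exists>u. (\<forall>k<N. u k \<in> words I q) \<and>
    (\<forall>k<N. \<forall>k'<N. agree_on U (u k) (u k') \<longrightarrow> k = k') \<and>
    (\<forall>j\<in>J. \<forall>k<N. \<forall>k'<N. k mod L j = k' mod L j \<longrightarrow> agree_on (T j) (u k) (u k') \<longrightarrow> k = k')"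
proof -
  define T' where "T' = case_option U T"
  define L' where "L' = case_option 1 L"
  have "(\<Sum>j\<in>insert None (Some ` J). ((N - 1) div L' j) * prod q (I - T' j)) < prod q I"
    using few J by (simp add: T'_def L'_def sum.reindex)
  from binned_words_exist[OF I _ this] J obtain u where "\<forall>k<N. u k \<in> words I q"
    and bins: "\<forall>j\<in>insert None (Some ` J). \<forall>k<N. \<forall>k'<N.
      k mod L' j = k' mod L' j \<longrightarrow> agree_on (T' j) (u k) (u k') \<longrightarrow> k = k'"
    by auto
  moreover have "\<forall>k<N. \<forall>k'<N. agree_on U (u k) (u k') \<longrightarrow> k = k'"
    using bins by (simp add: T'_def L'_def)
  moreover have "\<forall>j\<in>J. \<forall>k<N. \<forall>k'<N. k mod L j = k' mod L j \<longrightarrow> agree_on (T j) (u k) (u k') \<longrightarrow> k = k'"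
    using bins by (simp add: T'_def L'_def)
  ultimately show ?thesis by blast
qed

lemma card_agreeing_centers_le:
  assumes bins: "\<forall>k<N. \<forall>k'<N. k mod L = k' mod L \<longrightarrow> agree_on T (u k) (u k') \<longrightarrow> k = k'"
    and "0 < L" "0 < N2"
  shows "card {i. i < N * N2 \<and> agree_on T (u (i div N2)) x} \<le> L * N2"
proof -
  let ?B = "{k. k < N \<and> agree_on T (u k) x}"
  have "inj_on (\<lambda>k. k mod L) ?B"
  proof (rule inj_onI)
    fix k k' assume "k \<in> ?B" "k' \<in> ?B" and "k mod L = k' mod L"
    moreover from this have "agree_on T (u k) (u k')" by (auto simp: agree_on_def)
    ultimately show "k = k'" using bins by blast
  qed
  moreover have "(\<lambda>k. k mod L) ` ?B \<subseteq> {..<L}" using \<open>0 < L\<close> by auto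
  ultimately have "card ?B \<le> L" using card_inj_on_le[of "\<lambda>k. k mod L" ?B "{..<L}"] by simp
  have sub: "{i. i < N * N2 \<and> agree_on T (u (i div N2)) x} \<subseteq> (\<lambda>(k, r). k * N2 + r) ` (?B \<times> {..<N2})"
  proof
    fix i assume "i \<in> {i. i < N * N2 \<and> agree_on T (u (i div N2)) x}"
    then have "(i div N2, i mod N2) \<in> ?B \<times> {..<N2}" using \<open>0 < N2\<close> by (simp add: less_mult_imp_div_less)
    then show "i \<in> (\<lambda>(k, r). k * N2 + r) ` (?B \<times> {..<N2})" by (rule rev_image_eqI) simp
  qed
  have fin: "finite (?B \<times> {..<N2})" by simp
  have "card {i. i < N * N2 \<and> agree_on T (u (i div N2)) x} \<le> card ((\<lambda>(k, r). k * N2 + r) ` (?B \<times> {..<N2}))"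
    by (rule card_mono[OF finite_imageI[OF fin] sub])
  also have "\<dots> \<le> card (?B \<times> {..<N2})" by (rule card_image_le[OF fin])
  also have "\<dots> \<le> L * N2" using \<open>card ?B \<le> L\<close> by (simp add: card_cartesian_product)
  finally show ?thesis .
qed

lemma mixed_radix_digits:
  fixes a b N1 N2 m :: nat
  assumes "a < N1 * N2" "b < m"
  shows "b * (N1 * N2) + a < m * N1 * N2" "(b * (N1 * N2) + a) div N2 div N1 = b"
    "(b * (N1 * N2) + a) div (N1 * N2) = b" "(b * (N1 * N2) + a) mod (N1 * N2) = a"
proof -
  have "b * (N1 * N2) + a < Suc b * (N1 * N2)" using assms(1) by simp
  also have "\<dots> \<le> m * (N1 * N2)" using assms(2) by (intro mult_le_mono1) simp
  finally show "b * (N1 * N2) + a < m * N1 * N2" by (simp add: mult.assoc)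
  have "N1 * N2 \<noteq> 0" using assms(1) by linarith
  then show div: "(b * (N1 * N2) + a) div (N1 * N2) = b" and "(b * (N1 * N2) + a) mod (N1 * N2) = a"
    using assms(1) by simp_all
  from div show "(b * (N1 * N2) + a) div N2 div N1 = b" by (metis div_mult2_eq mult.commute)
qed

lemma superposition_code_exists:
  fixes q :: "'a \<Rightarrow> nat" and V :: "'j \<Rightarrow> 'a set" and L :: "'j \<Rightarrow> nat" and m1 m2 N1 N2 :: nat
  defines "Nc \<equiv> m2 * N1"
  assumes I: "finite I" "U \<subseteq> I" and J: "finite J" and L: "\<forall>j\<in>J. 0 < L j" and N2: "0 < N2"
    and m1: "m1 \<le> N1 * N2"
    and few_centers: "(Nc - 1) * prod q (I - U) + (\<Sum>j\<in>J. ((Nc - 1) div L j) * prod q (I - (V j \<inter> U)))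
      < prod q I"
    and few_words: "(\<Sum>j\<in>J. (L j * N2 - 1) * prod q (I - (U \<union> V j))) < prod q (I - U)"
  shows "\<exists>e. (\<forall>a<m1. \<forall>b<m2. e a b \<in> words I q) \<and>
    (\<forall>a<m1. \<forall>b<m2. \<forall>a'<m1. \<forall>b'<m2. agree_on U (e a b) (e a' b') \<longrightarrow> b = b') \<and>
    (\<forall>j\<in>J. \<forall>a<m1. \<forall>b<m2. \<forall>a'<m1. \<forall>b'<m2. agree_on (V j) (e a b) (e a' b') \<longrightarrow> (a, b) = (a', b'))"
proof -
  obtain u where u_words: "\<forall>k<Nc. u k \<in> words I q"
    and u_common: "\<forall>k<Nc. \<forall>k'<Nc. agree_on U (u k) (u k') \<longrightarrow> k = k'"
    and u_bins: "\<forall>j\<in>J. \<forall>k<Nc. \<forall>k'<Nc. k mod L j = k' mod L j \<longrightarrow> agree_on (V j \<inter> U) (u k) (u k') \<longrightarrow> k = k'"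
    using binned_centers_exist[OF I(1) J few_centers] by blast
  have centers: "\<forall>i<Nc * N2. u (i div N2) \<in> words I q"
    using u_words by (simp add: less_mult_imp_div_less)
  have fibres: "\<forall>j\<in>J. \<forall>i<Nc * N2.
      card {i'. i' < Nc * N2 \<and> agree_on (V j \<inter> U) (u (i' div N2)) (u (i div N2))} \<le> L j * N2"
  proof (intro ballI allI impI)
    fix j i assume "j \<in> J"
    then show "card {i'. i' < Nc * N2 \<and> agree_on (V j \<inter> U) (u (i' div N2)) (u (i div N2))} \<le> L j * N2"
      using u_bins L N2 by (intro card_agreeing_centers_le) auto
  qed
  obtain f where f_centers: "\<forall>i<Nc * N2. f i \<in> words_agreeing I q U (u (i div N2))"
    and f_private: "\<forall>j\<in>J. \<forall>i<Nc * N2. \<forall>i'<Nc * N2. agree_on (V j) (f i) (f i') \<longrightarrow> i = i'"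
    using superposition_words_exist[OF I J centers fibres few_words] by blast
  \<comment> \<open>Codeword number \<open>b * (N1 * N2) + a\<close> lies over centre number \<open>b * N1 + a div N2\<close>.\<close>
  let ?index = "\<lambda>a b. b * (N1 * N2) + a"
  have index: "?index a b < Nc * N2" "?index a b div N2 div N1 = b"
    "?index a b div (N1 * N2) = b" "?index a b mod (N1 * N2) = a"
    if "a < m1" "b < m2" for a b
  proof -
    have "a < N1 * N2" using that(1) m1 by linarith
    from mixed_radix_digits[OF this that(2)] show "?index a b < Nc * N2" "?index a b div N2 div N1 = b"
      "?index a b div (N1 * N2) = b" "?index a b mod (N1 * N2) = a"
      unfolding Nc_def by simp_all
  qed
  have f_words: "f (?index a b) \<in> words I q"
    and f_agree: "agree_on U (f (?index a b)) (u (?index a b div N2))"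
    if "a < m1" "b < m2" for a b
    using f_centers index(1)[OF that] unfolding words_agreeing_def by auto
  show ?thesis
  proof (intro exI[of _ "\<lambda>a b. f (?index a b)"] conjI allI impI ballI)
    fix a b assume "a < m1" "b < m2"
    then show "f (?index a b) \<in> words I q" by (rule f_words)
  next
    fix a b a' b' assume ab: "a < m1" "b < m2" and ab': "a' < m1" "b' < m2"
      and "agree_on U (f (?index a b)) (f (?index a' b'))"
    with f_agree[OF ab] f_agree[OF ab'] have "agree_on U (u (?index a b div N2)) (u (?index a' b' div N2))"
      by (auto simp: agree_on_def)
    then have "?index a b div N2 = ?index a' b' div N2"
      using u_common index(1)[OF ab] index(1)[OF ab'] by (meson less_mult_imp_div_less)
    then have "?index a b div N2 div N1 = ?index a' b' div N2 div N1" by (simp only:)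
    then show "b = b'" by (simp only: index(2)[OF ab] index(2)[OF ab'])
  next
    fix j a b a' b' assume "j \<in> J" and ab: "a < m1" "b < m2" and ab': "a' < m1" "b' < m2"
      and "agree_on (V j) (f (?index a b)) (f (?index a' b'))"
    then have "?index a b = ?index a' b'" using f_private index(1)[OF ab] index(1)[OF ab'] by blast
    then show "(a, b) = (a', b')" using index(3,4)[OF ab] index(3,4)[OF ab'] by metis
  qed
qed

section \<open>Zero-error codes for the combination network\<close>

lemma finite_links: "finite (links K)"
  unfolding links_def by (rule finite_subset[of _ "Pow {1..K}"]) auto

lemma W_subset_links: "W K j \<subseteq> links K"
  unfolding W_def by auto

lemma capW_nonneg:
  assumes "\<forall>S\<in>links K. 0 \<le> C S" "Ws \<subseteq> links K"
  shows "0 \<le> capW C Ws"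
  unfolding capW_def using assms by (auto intro: sum_nonneg)

lemma capW_mono:
  assumes "\<forall>S\<in>links K. 0 \<le> C S" "Ws \<subseteq> Ws'" "Ws' \<subseteq> links K"
  shows "capW C Ws \<le> capW C Ws'"
  unfolding capW_def using assms finite_subset[OF _ finite_links] by (intro sum_mono2) auto

lemma capW_Int_Diff:
  assumes "Ws \<subseteq> links K"
  shows "capW C Ws = capW C (Ws \<inter> Ws') + capW C (Ws - Ws')"
  unfolding capW_def using assms finite_subset[OF _ finite_links] by (intro sum.Int_Diff) auto

lemma real_prod_blk_alph:
  assumes C: "\<forall>S\<in>links K. 0 \<le> C S \<and> 2 powr C S \<in> \<nat>" and Ws: "Ws \<subseteq> links K"
  shows "real (prod (blk_alph C n) Ws) = 2 powr (real n * capW C Ws)"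
proof -
  have "real (blk_alph C n S) = 2 powr (real n * C S)" if "S \<in> Ws" for S
  proof -
    have "2 powr C S \<in> \<nat>" using C Ws that by blast
    then obtain m where m: "2 powr C S = real m" by (rule Nats_cases)
    then have "real (blk_alph C n S) = (2 powr C S) ^ n" unfolding blk_alph_def by simp
    then show ?thesis by (simp add: powr_power mult.commute)
  qed
  then have "real (prod (blk_alph C n) Ws) = (\<Prod>S\<in>Ws. 2 powr (real n * C S))"
    unfolding of_nat_prod by (rule prod.cong[OF refl])
  also have "\<dots> = 2 powr (real n * capW C Ws)"
    unfolding capW_def sum_distrib_left by (simp add: powr_sum)
  finally show ?thesis .
qed

lemma blk_alph_pos:
  assumes "\<forall>S\<in>links K. 0 \<le> C S \<and> 2 powr C S \<in> \<nat>" "S \<in> links K"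
  shows "0 < blk_alph C n S"
proof -
  have "real (blk_alph C n S) = 2 powr (real n * capW C {S})"
    using real_prod_blk_alph[OF assms(1), of "{S}" n] assms(2) by simp
  then have "0 < real (blk_alph C n S)" by simp
  then show ?thesis by simp
qed

lemma rx_out_eq_iff:
  "rx_out K enc j a b = rx_out K enc j a' b' \<longleftrightarrow> agree_on (W K j) (\<lambda>S. enc S a b) (\<lambda>S. enc S a' b')"
  unfolding rx_out_def agree_on_def fun_eq_iff by auto

lemma error_prob_eq_0_if_decodable:
  assumes common: "\<And>a b a' b'. a < m1 \<Longrightarrow> b < m2 \<Longrightarrow> a' < m1 \<Longrightarrow> b' < m2 \<Longrightarrow>
      rx_out K enc K a b = rx_out K enc K a' b' \<Longrightarrow> b = b'"
    and full: "\<And>j a b a' b'. j \<in> {1..<K} \<Longrightarrow> a < m1 \<Longrightarrow> b < m2 \<Longrightarrow> a' < m1 \<Longrightarrow> b' < m2 \<Longrightarrow>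
      rx_out K enc j a b = rx_out K enc j a' b' \<Longrightarrow> (a, b) = (a', b')"
  shows "\<exists>dec. error_prob K m1 m2 enc dec = 0"
proof -
  define dec where "dec j y = (SOME p. fst p < m1 \<and> snd p < m2 \<and> rx_out K enc j (fst p) (snd p) = y)" for j y
  have dec: "fst (dec j (rx_out K enc j a b)) < m1 \<and> snd (dec j (rx_out K enc j a b)) < m2 \<and>
      rx_out K enc j (fst (dec j (rx_out K enc j a b))) (snd (dec j (rx_out K enc j a b))) = rx_out K enc j a b"
    if "a < m1" "b < m2" for j a b
    unfolding dec_def by (rule someI[of _ "(a, b)"]) (use that in simp)
  have "\<not> error_event K enc dec a b" if "a < m1" "b < m2" for a b
  proof -
    have "dec j (rx_out K enc j a b) = (a, b)" if "j \<in> {1..<K}" for j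
      using full[OF that _ _ \<open>a < m1\<close> \<open>b < m2\<close>] dec[OF \<open>a < m1\<close> \<open>b < m2\<close>, of j]
      by (metis prod.collapse)
    moreover have "snd (dec K (rx_out K enc K a b)) = b"
      using common[OF _ _ that] dec[OF that, of K] by blast
    ultimately show ?thesis unfolding error_event_def by blast
  qed
  then have no_errors: "{(a, b). a < m1 \<and> b < m2 \<and> error_event K enc dec a b} = {}" by auto
  have "error_prob K m1 m2 enc dec = 0"
    unfolding error_prob_def no_errors by simp
  then show ?thesis by blast
qed

lemma zero_error_code_if_separating:
  assumes words: "\<forall>a<m1. \<forall>b<m2. e a b \<in> words (links K) (blk_alph C n)"
    and common: "\<forall>a<m1. \<forall>b<m2. \<forall>a'<m1. \<forall>b'<m2. agree_on (W K K) (e a b) (e a' b') \<longrightarrow> b = b'"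
    and full: "\<forall>j\<in>{1..<K}. \<forall>a<m1. \<forall>b<m2. \<forall>a'<m1. \<forall>b'<m2.
      agree_on (W K j) (e a b) (e a' b') \<longrightarrow> (a, b) = (a', b')"
  shows "\<exists>enc dec. valid_encoder K C n m1 m2 enc \<and> error_prob K m1 m2 enc dec = 0"
proof -
  define enc where "enc S a b = e a b S" for S a b
  have rx: "rx_out K enc j a b = rx_out K enc j a' b' \<longleftrightarrow> agree_on (W K j) (e a b) (e a' b')" for j a b a' b'
    unfolding rx_out_eq_iff enc_def by simp
  have "valid_encoder K C n m1 m2 enc"
    using words unfolding valid_encoder_def enc_def words_def by (auto dest: PiE_mem)
  moreover have "\<exists>dec. error_prob K m1 m2 enc dec = 0"
    using common full by (intro error_prob_eq_0_if_decodable) (auto simp: rx)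
  ultimately show ?thesis by blast
qed

lemma counting_condition_if_normalized:
  fixes a :: "'j \<Rightarrow> nat" and T :: "'j \<Rightarrow> 'a set"
  assumes I: "finite I" "\<forall>i\<in>I. 0 < q i" and T: "T0 \<subseteq> I" "\<forall>j\<in>J. T j \<subseteq> I"
    and normalized: "real a0 / real (prod q T0) + (\<Sum>j\<in>J. real (a j) / real (prod q (T j))) < 1"
  shows "a0 * prod q (I - T0) + (\<Sum>j\<in>J. a j * prod q (I - T j)) < prod q I"
proof -
  have scaled: "real (b * prod q (I - X)) = real (prod q I) * (real b / real (prod q X))" if "X \<subseteq> I" for b X
  proof -
    have "prod q I = prod q (I - X) * prod q X" by (rule prod.subset_diff[OF that I(1)])
    moreover have "0 < prod q X" using I that by (auto intro!: prod_pos)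
    ultimately show ?thesis by (simp add: field_simps del: of_nat_prod)
  qed
  have "(\<Sum>j\<in>J. real (a j * prod q (I - T j))) = (\<Sum>j\<in>J. real (prod q I) * (real (a j) / real (prod q (T j))))"
    using T(2) by (intro sum.cong refl scaled) auto
  then have "real (a0 * prod q (I - T0) + (\<Sum>j\<in>J. a j * prod q (I - T j)))
      = real (prod q I) * (real a0 / real (prod q T0) + (\<Sum>j\<in>J. real (a j) / real (prod q (T j))))"
    by (simp only: of_nat_add of_nat_sum scaled[OF T(1)] distrib_left sum_distrib_left)
  also have "\<dots> < real (prod q I)"
    using normalized I by (simp add: prod_pos del: of_nat_prod)
  finally show ?thesis by (simp only: of_nat_less_iff)
qed

lemma zero_error_code_exists:
  fixes C :: "nat set \<Rightarrow> real" and n m1 m2 N1 N2 :: nat and L :: "nat \<Rightarrow> nat"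
  defines "Nc \<equiv> m2 * N1"
  assumes C: "\<forall>S\<in>links K. 0 \<le> C S \<and> 2 powr C S \<in> \<nat>"
    and L: "\<forall>j\<in>{1..<K}. 0 < L j" and N2: "0 < N2" and m1: "m1 \<le> N1 * N2"
    and few_centers: "real (Nc - 1) / 2 powr (real n * capW C (W K K)) +
      (\<Sum>j=1..<K. real ((Nc - 1) div L j) / 2 powr (real n * capW C (W K j \<inter> W K K))) < 1"
    and few_words: "(\<Sum>j=1..<K. real (L j * N2 - 1) / 2 powr (real n * capW C (W K j - W K K))) < 1"
  shows "\<exists>enc dec. valid_encoder K C n m1 m2 enc \<and> error_prob K m1 m2 enc dec = 0"
proof -
  let ?q = "blk_alph C n" and ?I = "links K" and ?U = "W K K"
  have sub: "?U \<subseteq> ?I" "W K j \<inter> ?U \<subseteq> ?I" "W K j - ?U \<subseteq> ?I - ?U" "W K j - ?U \<subseteq> ?I" for j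
    using W_subset_links by blast+
  have Q: "2 powr (real n * capW C X) = real (prod ?q X)" if "X \<subseteq> ?I" for X
    using real_prod_blk_alph[OF C that] by simp
  have q: "\<forall>S\<in>?I. 0 < ?q S" "\<forall>S\<in>?I - ?U. 0 < ?q S" using blk_alph_pos[OF C] by auto
  have "real (Nc - 1) / real (prod ?q ?U) +
      (\<Sum>j=1..<K. real ((Nc - 1) div L j) / real (prod ?q (W K j \<inter> ?U))) < 1"
    using few_centers by (simp only: Q[OF sub(1)] Q[OF sub(2)])
  with sub have centers: "(m2 * N1 - 1) * prod ?q (?I - ?U) +
      (\<Sum>j=1..<K. ((m2 * N1 - 1) div L j) * prod ?q (?I - (W K j \<inter> ?U))) < prod ?q ?I"
    unfolding Nc_def by (intro counting_condition_if_normalized finite_links q(1)) auto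
  have "(\<Sum>j=1..<K. real (L j * N2 - 1) / real (prod ?q (W K j - ?U))) < 1"
    using few_words by (simp only: Q[OF sub(4)])
  then have "real (0 :: nat) / real (prod ?q {}) +
      (\<Sum>j=1..<K. real (L j * N2 - 1) / real (prod ?q (W K j - ?U))) < 1"
    by (simp only: of_nat_0 div_0 add_0)
  with sub have "0 * prod ?q ((?I - ?U) - {}) +
      (\<Sum>j=1..<K. (L j * N2 - 1) * prod ?q ((?I - ?U) - (W K j - ?U))) < prod ?q (?I - ?U)"
    by (intro counting_condition_if_normalized finite_Diff finite_links q(2)) auto
  moreover have "(?I - ?U) - (W K j - ?U) = ?I - (?U \<union> W K j)" for j by blast
  ultimately have satellites: "(\<Sum>j=1..<K. (L j * N2 - 1) * prod ?q (?I - (?U \<union> W K j))) < prod ?q (?I - ?U)"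
    by (simp only: mult_zero_left add_0)
  from superposition_code_exists[OF finite_links sub(1) finite_atLeastLessThan L N2 m1 centers satellites]
  obtain e where "\<forall>a<m1. \<forall>b<m2. e a b \<in> words ?I ?q"
    and "\<forall>a<m1. \<forall>b<m2. \<forall>a'<m1. \<forall>b'<m2. agree_on ?U (e a b) (e a' b') \<longrightarrow> b = b'"
    and "\<forall>j\<in>{1..<K}. \<forall>a<m1. \<forall>b<m2. \<forall>a'<m1. \<forall>b'<m2.
      agree_on (W K j) (e a b) (e a' b') \<longrightarrow> (a, b) = (a', b')"
    by (elim exE conjE)
  then show ?thesis by (rule zero_error_code_if_separating)
qed

section \<open>Message sizes and asymptotics\<close>

lemma of_int_msg_size: "real (msg_size n R) = of_int \<lceil>2 powr (real n * R)\<rceil>"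
proof -
  have "-1 < 2 powr (real n * R)" by (rule less_trans[of _ 0]) simp_all
  then have "0 \<le> \<lceil>2 powr (real n * R)\<rceil>" by simp
  then show ?thesis unfolding msg_size_def by simp
qed

lemma msg_size_pos: "0 < msg_size n R"
  unfolding msg_size_def by simp

lemma msg_size_ge: "2 powr (real n * R) \<le> real (msg_size n R)"
  unfolding of_int_msg_size by simp

lemma msg_size_le:
  assumes "0 \<le> R"
  shows "real (msg_size n R) \<le> 2 * 2 powr (real n * R)"
proof -
  have "1 \<le> 2 powr (real n * R)" using assms by (intro ge_one_powr_ge_zero) auto
  moreover have "real (msg_size n R) < 2 powr (real n * R) + 1"
    unfolding of_int_msg_size by linarith
  ultimately show ?thesis by linarith
qed

lemma msg_size_0 [simp]: "msg_size n 0 = 1"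
  unfolding msg_size_def by simp

lemma msg_size_add_le: "msg_size n (R + R') \<le> msg_size n R * msg_size n R'"
proof -
  have "2 powr (real n * (R + R')) \<le> real (msg_size n R * msg_size n R')"
    unfolding distrib_left powr_add of_nat_mult by (intro mult_mono msg_size_ge) auto
  then have "\<lceil>2 powr (real n * (R + R'))\<rceil> \<le> int (msg_size n R * msg_size n R')"
    by (simp add: ceiling_le_iff)
  then show ?thesis unfolding msg_size_def[of n "R + R'"] by (simp add: nat_le_iff)
qed

lemma tendsto_2_powr_neg:
  assumes "d < 0"
  shows "(\<lambda>n. 2 powr (real n * d)) \<longlonglongrightarrow> 0"
proof -
  have "2 powr d < 2 powr 0" using assms by (intro powr_less_mono) auto
  then have "(\<lambda>n. (2 powr d) ^ n) \<longlonglongrightarrow> 0" by (intro LIMSEQ_power_zero) simp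
  then show ?thesis by (simp add: powr_power mult.commute)
qed

lemma powr_2_ratio: "2 powr (real n * a) / 2 powr (real n * b) = 2 powr (real n * (a - b))"
  by (simp add: right_diff_distrib powr_diff)

lemma tendsto_zero_if_le_2_powr:
  fixes X :: "nat \<Rightarrow> real"
  assumes "d < 0" "\<And>n. 0 \<le> X n" "\<And>n. X n \<le> B * 2 powr (real n * d)"
  shows "X \<longlonglongrightarrow> 0"
proof (rule tendsto_sandwich[of "\<lambda>_. 0" _ _ "\<lambda>n. B * 2 powr (real n * d)"])
  show "(\<lambda>n. B * 2 powr (real n * d)) \<longlonglongrightarrow> 0"
    using tendsto_mult_right_zero[OF tendsto_2_powr_neg[OF assms(1)]] .
qed (use assms in auto)

lemma prod_msg_size_le:
  assumes "\<forall>r\<in>set rs. 0 \<le> r"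
  shows "real (prod_list (map (msg_size n) rs)) \<le> 2 ^ length rs * 2 powr (real n * sum_list rs)"
  using assms
proof (induction rs)
  case Nil
  then show ?case by simp
next
  case (Cons r rs)
  have "real (prod_list (map (msg_size n) (r # rs)))
      = real (msg_size n r) * real (prod_list (map (msg_size n) rs))" by simp
  also have "\<dots> \<le> (2 * 2 powr (real n * r)) * (2 ^ length rs * 2 powr (real n * sum_list rs))"
    using Cons by (intro mult_mono msg_size_le) auto
  also have "\<dots> = 2 ^ length (r # rs) * 2 powr (real n * sum_list (r # rs))"
    by (simp add: distrib_left powr_add)
  finally show ?case .
qed

lemma prod_msg_size_excess_tendsto_0:
  assumes rs: "\<forall>r\<in>set rs. 0 \<le> r" and sum: "sum_list rs \<le> t * c" and "t < 1" "0 \<le> c"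
  shows "(\<lambda>n. real (prod_list (map (msg_size n) rs) - 1) / 2 powr (real n * c)) \<longlonglongrightarrow> 0"
proof (cases "c = 0")
  case True
  with rs sum have "\<forall>r\<in>set rs. r = 0"
    using sum_list_nonneg[of rs] sum_list_nonneg_eq_0_iff[of rs] by auto
  then have "prod_list (map (msg_size n) rs) = 1" for n
    by (induction rs) auto
  then show ?thesis by simp
next
  case False
  with assms have d: "(t - 1) * c < 0" by (simp add: mult_neg_pos)
  show ?thesis
  proof (rule tendsto_zero_if_le_2_powr[OF d])
    fix n
    have "real (prod_list (map (msg_size n) rs) - 1) \<le> 2 ^ length rs * 2 powr (real n * sum_list rs)"
      using prod_msg_size_le[OF rs, of n] by linarith
    also have "\<dots> \<le> 2 ^ length rs * 2 powr (real n * (t * c))"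
      using sum by (simp add: mult_left_mono)
    finally have "real (prod_list (map (msg_size n) rs) - 1) / 2 powr (real n * c)
        \<le> 2 ^ length rs * (2 powr (real n * (t * c)) / 2 powr (real n * c))"
      by (simp add: divide_right_mono)
    then show "real (prod_list (map (msg_size n) rs) - 1) / 2 powr (real n * c)
        \<le> 2 ^ length rs * 2 powr (real n * ((t - 1) * c))"
      by (simp add: powr_2_ratio left_diff_distrib)
  qed simp
qed

lemma prod_msg_size_div_tendsto_0:
  assumes rs: "\<forall>r\<in>set rs. 0 \<le> r" and sum: "sum_list rs \<le> l + t * c" and "t < 1" "0 < c"
  shows "(\<lambda>n. real ((prod_list (map (msg_size n) rs) - 1) div msg_size n l) / 2 powr (real n * c))
    \<longlonglongrightarrow> 0"
proof -
  from assms have d: "(t - 1) * c < 0" by (simp add: mult_neg_pos)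
  show ?thesis
  proof (rule tendsto_zero_if_le_2_powr[OF d])
    fix n
    let ?P = "prod_list (map (msg_size n) rs)"
    have "real ((?P - 1) div msg_size n l) \<le> real (?P - 1) / real (msg_size n l)"
      by (rule of_nat_div_le_of_nat)
    also have "\<dots> \<le> 2 ^ length rs * 2 powr (real n * sum_list rs) / 2 powr (real n * l)"
    proof (rule frac_le)
      show "real (?P - 1) \<le> 2 ^ length rs * 2 powr (real n * sum_list rs)"
        using prod_msg_size_le[OF rs, of n] by linarith
    qed (simp_all add: msg_size_ge)
    also have "\<dots> = 2 ^ length rs * 2 powr (real n * (sum_list rs - l))"
      by (simp add: powr_2_ratio flip: times_divide_eq_right)
    also have "\<dots> \<le> 2 ^ length rs * 2 powr (real n * (t * c))"
      using sum by (simp add: mult_left_mono)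
    finally have "real ((?P - 1) div msg_size n l) / 2 powr (real n * c)
        \<le> 2 ^ length rs * (2 powr (real n * (t * c)) / 2 powr (real n * c))"
      by (simp add: divide_right_mono)
    then show "real ((?P - 1) div msg_size n l) / 2 powr (real n * c)
        \<le> 2 ^ length rs * 2 powr (real n * ((t - 1) * c))"
      by (simp add: powr_2_ratio left_diff_distrib)
  qed simp
qed

section \<open>Achievability\<close>

(* Number of bins for a receiver that sees the centres through links of total capacity c: about
   2^(n (R + r1 - t c)), so that a bin holds about 2^(n t c) < 2^(n c) centres. When c = 0 the
   receiver cannot tell centres apart at all, and every centre needs a bin of its own. *)
definition bin_count :: "real \<Rightarrow> real \<Rightarrow> real \<Rightarrow> real \<Rightarrow> nat \<Rightarrow> nat" where
  "bin_count R r1 t c n =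
    (if c = 0 then msg_size n R * msg_size n r1 else msg_size n (max 0 (R + r1 - t * c)))"

lemma bin_count_pos: "0 < bin_count R r1 t c n"
  unfolding bin_count_def by (simp add: msg_size_pos)

lemma bin_term_tendsto_0:
  assumes "0 \<le> R" "0 \<le> r1" "t < 1" "0 \<le> c"
  shows "(\<lambda>n. real ((msg_size n R * msg_size n r1 - 1) div bin_count R r1 t c n) / 2 powr (real n * c))
    \<longlonglongrightarrow> 0"
proof (cases "c = 0")
  case True
  then have "(msg_size n R * msg_size n r1 - 1) div bin_count R r1 t c n = 0" for n
    using bin_count_pos[of R r1 t c n] by (simp add: bin_count_def)
  then show ?thesis by simp
next
  case False
  then show ?thesis
    using prod_msg_size_div_tendsto_0[of "[R, r1]" "max 0 (R + r1 - t * c)" t c] assms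
    unfolding bin_count_def by simp
qed

lemma satellite_term_tendsto_0:
  assumes "0 \<le> R" "0 \<le> r1" "0 \<le> r2" "t < 1" "0 \<le> c'"
    and split: "max 0 (R + r1 - t * c) + r2 \<le> t * c'"
  shows "(\<lambda>n. real (bin_count R r1 t c n * msg_size n r2 - 1) / 2 powr (real n * c')) \<longlonglongrightarrow> 0"
proof (cases "c = 0")
  case True
  then have eq: "bin_count R r1 t c n * msg_size n r2 = prod_list (map (msg_size n) [R, r1, r2])" for n
    unfolding bin_count_def by simp
  have "R + r1 + r2 \<le> t * c'" using split True assms by (auto simp: max_def)
  then have "(\<lambda>n. real (prod_list (map (msg_size n) [R, r1, r2]) - 1) / 2 powr (real n * c')) \<longlonglongrightarrow> 0"
    using assms by (intro prod_msg_size_excess_tendsto_0) auto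
  then show ?thesis by (simp only: eq)
next
  case False
  then have eq: "bin_count R r1 t c n * msg_size n r2
      = prod_list (map (msg_size n) [max 0 (R + r1 - t * c), r2])" for n
    unfolding bin_count_def by simp
  have "(\<lambda>n. real (prod_list (map (msg_size n) [max 0 (R + r1 - t * c), r2]) - 1) / 2 powr (real n * c'))
      \<longlonglongrightarrow> 0"
    using assms by (intro prod_msg_size_excess_tendsto_0) auto
  then show ?thesis by (simp only: eq)
qed

lemma eventually_code_conditions:
  fixes R r1 r2 t cK :: real and cT cR :: "'j \<Rightarrow> real"
  defines "Nc \<equiv> \<lambda>n. msg_size n R * msg_size n r1"
  assumes J: "finite J" and t: "t < 1" and c: "0 \<le> cK" "\<forall>j\<in>J. 0 \<le> cT j \<and> 0 \<le> cR j"
    and rates: "0 \<le> R" "0 \<le> r1" "0 \<le> r2" "R + r1 \<le> t * cK"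
    and split: "\<forall>j\<in>J. max 0 (R + r1 - t * cT j) + r2 \<le> t * cR j"
  shows "\<forall>\<^sub>F n in sequentially.
    real (Nc n - 1) / 2 powr (real n * cK) +
      (\<Sum>j\<in>J. real ((Nc n - 1) div bin_count R r1 t (cT j) n) / 2 powr (real n * cT j)) < 1 \<and>
    (\<Sum>j\<in>J. real (bin_count R r1 t (cT j) n * msg_size n r2 - 1) / 2 powr (real n * cR j)) < 1"
proof -
  have "(\<lambda>n. real (Nc n - 1) / 2 powr (real n * cK)) \<longlonglongrightarrow> 0"
    using prod_msg_size_excess_tendsto_0[of "[R, r1]" t cK] rates t c unfolding Nc_def by simp
  then have "(\<lambda>n. real (Nc n - 1) / 2 powr (real n * cK) +
      (\<Sum>j\<in>J. real ((Nc n - 1) div bin_count R r1 t (cT j) n) / 2 powr (real n * cT j))) \<longlonglongrightarrow> 0 + 0"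
    unfolding Nc_def using rates t c
    by (intro tendsto_add tendsto_null_sum bin_term_tendsto_0) auto
  then have "\<forall>\<^sub>F n in sequentially. real (Nc n - 1) / 2 powr (real n * cK) +
      (\<Sum>j\<in>J. real ((Nc n - 1) div bin_count R r1 t (cT j) n) / 2 powr (real n * cT j)) < 1"
    by (intro order_tendstoD(2)) auto
  moreover have "(\<lambda>n. \<Sum>j\<in>J. real (bin_count R r1 t (cT j) n * msg_size n r2 - 1) / 2 powr (real n * cR j))
      \<longlonglongrightarrow> 0"
    using rates t c split by (intro tendsto_null_sum satellite_term_tendsto_0) auto
  then have "\<forall>\<^sub>F n in sequentially.
      (\<Sum>j\<in>J. real (bin_count R r1 t (cT j) n * msg_size n r2 - 1) / 2 powr (real n * cR j)) < 1"
    by (intro order_tendstoD(2)) auto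
  ultimately show ?thesis by (rule eventually_conj)
qed

lemma rate_split_exists:
  fixes R1 R2 aK :: real and aT aR :: "'j \<Rightarrow> real"
  assumes J: "finite J" "J \<noteq> {}" and R1: "0 \<le> R1" and aR: "\<forall>j\<in>J. 0 \<le> aR j"
    and aT: "\<forall>j\<in>J. aT j \<le> aK" and common: "R2 \<le> aK" and sum: "\<forall>j\<in>J. R1 + R2 \<le> aT j + aR j"
  shows "\<exists>r1 r2. 0 \<le> r1 \<and> 0 \<le> r2 \<and> R1 = r1 + r2 \<and> R2 + r1 \<le> aK \<and>
    (\<forall>j\<in>J. max 0 (R2 + r1 - aT j) + r2 \<le> aR j)"
proof -
  have "Min (aR ` J) \<in> aR ` J" using J by (intro Min_in) auto
  then obtain j0 where j0: "j0 \<in> J" "aR j0 = Min (aR ` J)" by (metis imageE)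
  have min: "aR j0 \<le> aR j" if "j \<in> J" for j
    using J that unfolding j0(2) by simp
  define r2 where "r2 = min R1 (aR j0)"
  show ?thesis
  proof (rule exI[of _ "R1 - r2"], rule exI[of _ r2], intro conjI ballI)
    show "0 \<le> R1 - r2" "0 \<le> r2" "R1 = R1 - r2 + r2"
      using R1 aR j0(1) unfolding r2_def by auto
    show "R2 + (R1 - r2) \<le> aK"
      using common sum[rule_format, OF j0(1)] aT[rule_format, OF j0(1)] unfolding r2_def
      by (auto simp: min_def)
  next
    fix j assume "j \<in> J"
    then show "max 0 (R2 + (R1 - r2) - aT j) + r2 \<le> aR j"
      using sum min[of j] unfolding r2_def by (auto simp: max_def min_def)
  qed
qed

lemma network_rate_split_exists:
  assumes K: "2 \<le> K" and C: "\<forall>S\<in>links K. 0 \<le> C S" and R1: "0 \<le> R1" and t: "0 \<le> t"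
    and common: "R2 \<le> t * capW C (W K K)" and sum: "\<forall>j\<in>{1..<K}. R1 + R2 \<le> t * capW C (W K j)"
  shows "\<exists>r1 r2. 0 \<le> r1 \<and> 0 \<le> r2 \<and> R1 = r1 + r2 \<and> R2 + r1 \<le> t * capW C (W K K) \<and>
    (\<forall>j\<in>{1..<K}. max 0 (R2 + r1 - t * capW C (W K j \<inter> W K K)) + r2 \<le> t * capW C (W K j - W K K))"
proof (rule rate_split_exists)
  have sub: "W K j \<inter> W K K \<subseteq> W K K" "W K j - W K K \<subseteq> links K" for j
    using W_subset_links by blast+
  show "finite {1..<K}" "{1..<K} \<noteq> {}" using K by auto
  show "\<forall>j\<in>{1..<K}. 0 \<le> t * capW C (W K j - W K K)"
    using capW_nonneg[OF C sub(2)] t by simp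
  show "\<forall>j\<in>{1..<K}. t * capW C (W K j \<inter> W K K) \<le> t * capW C (W K K)"
    using capW_mono[OF C sub(1) W_subset_links] t by (simp add: mult_left_mono)
  show "\<forall>j\<in>{1..<K}. R1 + R2 \<le> t * capW C (W K j \<inter> W K K) + t * capW C (W K j - W K K)"
    using sum capW_Int_Diff[OF W_subset_links, of C K _ "W K K"] by (simp add: distrib_left)
qed (use R1 common in auto)

lemma eventually_zero_error_code:
  assumes K: "2 \<le> K" and C: "\<forall>S\<in>links K. 0 \<le> C S \<and> 2 powr C S \<in> \<nat>"
    and R: "0 \<le> R1" "0 \<le> R2" and t: "0 \<le> t" "t < 1"
    and common: "R2 \<le> t * capW C (W K K)" and sum: "\<forall>j\<in>{1..<K}. R1 + R2 \<le> t * capW C (W K j)"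
  shows "\<forall>\<^sub>F n in sequentially. \<exists>enc dec. valid_encoder K C n (msg_size n R1) (msg_size n R2) enc \<and>
    error_prob K (msg_size n R1) (msg_size n R2) enc dec = 0"
proof -
  let ?cT = "\<lambda>j. capW C (W K j \<inter> W K K)" and ?cR = "\<lambda>j. capW C (W K j - W K K)"
  have C0: "\<forall>S\<in>links K. 0 \<le> C S" using C by blast
  \<comment> \<open>\<open>r1\<close> is the part of the private rate carried by the cloud centres, \<open>r2\<close> the rest.\<close>
  obtain r1 r2 where r: "0 \<le> r1" "0 \<le> r2" "R1 = r1 + r2" "R2 + r1 \<le> t * capW C (W K K)"
    and split: "\<forall>j\<in>{1..<K}. max 0 (R2 + r1 - t * ?cT j) + r2 \<le> t * ?cR j"
    using network_rate_split_exists[OF K C0 R(1) t(1) common sum] by blast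
  have "0 \<le> capW C (W K K)" "\<forall>j\<in>{1..<K}. 0 \<le> ?cT j \<and> 0 \<le> ?cR j"
    using capW_nonneg[OF C0] W_subset_links by blast+
  then have "\<forall>\<^sub>F n in sequentially.
      real (msg_size n R2 * msg_size n r1 - 1) / 2 powr (real n * capW C (W K K)) +
        (\<Sum>j=1..<K. real ((msg_size n R2 * msg_size n r1 - 1) div bin_count R2 r1 t (?cT j) n) /
          2 powr (real n * ?cT j)) < 1 \<and>
      (\<Sum>j=1..<K. real (bin_count R2 r1 t (?cT j) n * msg_size n r2 - 1) / 2 powr (real n * ?cR j)) < 1"
    using R r split t by (intro eventually_code_conditions) auto
  then show ?thesis
    apply (rule eventually_mono)
    subgoal for n
      using zero_error_code_exists[OF C _ msg_size_pos, of "\<lambda>j. bin_count R2 r1 t (?cT j) n"]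
        msg_size_add_le[of n r1 r2]
      by (simp add: r(3) bin_count_pos)
    done
qed

lemma error_prob_le_1: "error_prob K m1 m2 enc dec \<le> 1"
proof -
  have "card {(a, b). a < m1 \<and> b < m2 \<and> error_event K enc dec a b} \<le> card ({..<m1} \<times> {..<m2})"
    by (intro card_mono) auto
  then have "card {(a, b). a < m1 \<and> b < m2 \<and> error_event K enc dec a b} \<le> m1 * m2"
    by (simp add: card_cartesian_product)
  then have "real (card {(a, b). a < m1 \<and> b < m2 \<and> error_event K enc dec a b}) \<le> real m1 * real m2"
    by (metis of_nat_le_iff of_nat_mult)
  then show ?thesis
    unfolding error_prob_def by (auto simp: divide_le_eq_1 zero_less_mult_iff)
qed

lemma achievable_if_eventually_zero_error:
  assumes C: "\<forall>S\<in>links K. 0 \<le> C S \<and> 2 powr C S \<in> \<nat>" and R: "0 \<le> R1" "0 \<le> R2"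
    and codes: "\<forall>\<^sub>F n in sequentially. \<exists>enc dec. valid_encoder K C n (msg_size n R1) (msg_size n R2) enc \<and>
      error_prob K (msg_size n R1) (msg_size n R2) enc dec = 0"
  shows "achievable K C (R1, R2)"
proof -
  define good where "good n \<longleftrightarrow> (\<exists>enc dec. valid_encoder K C n (msg_size n R1) (msg_size n R2) enc \<and>
      error_prob K (msg_size n R1) (msg_size n R2) enc dec = 0)" for n
  define Pe where "Pe n = (if good n then 0 else 1 :: real)" for n
  have "Pe \<longlonglongrightarrow> 0"
    using codes unfolding good_def[symmetric]
    by (intro tendsto_eventually) (auto elim: eventually_mono simp: Pe_def)
  moreover have "\<exists>enc dec. valid_encoder K C n (msg_size n R1) (msg_size n R2) enc \<and>
      error_prob K (msg_size n R1) (msg_size n R2) enc dec \<le> Pe n" for n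
  proof (cases "good n")
    case True
    then have "Pe n = 0" by (simp add: Pe_def)
    with True show ?thesis unfolding good_def by (auto intro: eq_refl)
  next
    case False
    have "valid_encoder K C n (msg_size n R1) (msg_size n R2) (\<lambda>S a b. 0)"
      using blk_alph_pos[OF C] unfolding valid_encoder_def by simp
    then show ?thesis using False error_prob_le_1 unfolding Pe_def by auto
  qed
  ultimately show ?thesis unfolding achievable_def using R by auto
qed

lemma achievable_scaled:
  assumes K: "2 \<le> K" and C: "\<forall>S\<in>links K. 0 \<le> C S \<and> 2 powr C S \<in> \<nat>"
    and R: "0 \<le> R1" "0 \<le> R2" "R2 \<le> capW C (W K K)" "\<forall>j\<in>{1..<K}. R2 + R1 \<le> capW C (W K j)"
    and t: "0 \<le> t" "t < 1"
  shows "achievable K C (t * R1, t * R2)"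
proof (intro achievable_if_eventually_zero_error[OF C] eventually_zero_error_code[OF K C _ _ t])
  show "t * R2 \<le> t * capW C (W K K)" using R t by (simp add: mult_left_mono)
  show "\<forall>j\<in>{1..<K}. t * R1 + t * R2 \<le> t * capW C (W K j)"
  proof
    fix j assume "j \<in> {1..<K}"
    then have "R1 + R2 \<le> capW C (W K j)" using R by (simp add: add.commute)
    then show "t * R1 + t * R2 \<le> t * capW C (W K j)"
      using t by (simp add: mult_left_mono flip: distrib_left)
  qed
qed (use R t in auto)

lemma mem_closure_if_scaled_mem:
  fixes x :: "'a :: real_normed_vector"
  assumes "\<And>t. 0 \<le> t \<Longrightarrow> t < 1 \<Longrightarrow> t *\<^sub>R x \<in> S"
  shows "x \<in> closure S"
proof -
  define t where "t n = 1 - inverse (real (Suc n))" for n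
  have "0 \<le> t n" "t n < 1" for n unfolding t_def by (auto simp: field_simps)
  moreover have "t \<longlonglongrightarrow> 1 - 0"
    unfolding t_def by (intro tendsto_diff tendsto_const LIMSEQ_inverse_real_of_nat)
  then have "(\<lambda>n. t n *\<^sub>R x) \<longlonglongrightarrow> 1 *\<^sub>R x"
    by (intro tendsto_scaleR tendsto_const) simp
  ultimately show ?thesis
    unfolding closure_sequential using assms by (intro exI[of _ "\<lambda>n. t n *\<^sub>R x"]) auto
qed

section \<open>Converse\<close>

lemma card_rx_out_image_le:
  assumes valid: "valid_encoder K C n m1 m2 enc"
  shows "card ((\<lambda>(a, b). rx_out K enc j a b) ` ({..<m1} \<times> {..<m2})) \<le> prod (blk_alph C n) (W K j)"
proof -
  let ?Y = "(\<lambda>(a, b). rx_out K enc j a b) ` ({..<m1} \<times> {..<m2})"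
  have "inj_on (\<lambda>y. restrict y (W K j)) ?Y"
  proof (rule inj_onI)
    fix y y' assume "y \<in> ?Y" "y' \<in> ?Y" and eq: "restrict y (W K j) = restrict y' (W K j)"
    have "y S = y' S" for S
    proof (cases "S \<in> W K j")
      case True
      then show ?thesis using fun_cong[OF eq, of S] by simp
    next
      case False
      then show ?thesis using \<open>y \<in> ?Y\<close> \<open>y' \<in> ?Y\<close> by (auto simp: rx_out_def)
    qed
    then show "y = y'" ..
  qed
  moreover have "(\<lambda>y. restrict y (W K j)) ` ?Y \<subseteq> words (W K j) (blk_alph C n)"
    using valid W_subset_links unfolding valid_encoder_def words_def rx_out_def by fastforce
  ultimately have "card ?Y \<le> card (words (W K j) (blk_alph C n))"
    using finite_subset[OF W_subset_links finite_links]
    by (intro card_inj_on_le finite_words) auto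
  then show ?thesis
    using finite_subset[OF W_subset_links finite_links] by (simp add: card_words)
qed

lemma card_decoded_le:
  assumes "valid_encoder K C n m1 m2 enc"
  shows "card {(a, b). a < m1 \<and> b < m2 \<and> dec j (rx_out K enc j a b) = (a, b)} \<le> prod (blk_alph C n) (W K j)"
proof -
  let ?G = "{(a, b). a < m1 \<and> b < m2 \<and> dec j (rx_out K enc j a b) = (a, b)}"
  let ?rx = "\<lambda>(a, b). rx_out K enc j a b"
  have "inj_on ?rx ?G"
    by (rule inj_on_inverseI[where g = "dec j"]) auto
  then have "card ?G = card (?rx ` ?G)" by (rule card_image[symmetric])
  also have "\<dots> \<le> card (?rx ` ({..<m1} \<times> {..<m2}))"
    by (intro card_mono image_mono) auto
  also have "\<dots> \<le> prod (blk_alph C n) (W K j)"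
    using card_rx_out_image_le[OF assms] .
  finally show ?thesis .
qed

lemma card_common_decoded_le:
  assumes "valid_encoder K C n m1 m2 enc"
  shows "card {(a, b). a < m1 \<and> b < m2 \<and> snd (dec K (rx_out K enc K a b)) = b}
    \<le> m1 * prod (blk_alph C n) (W K K)"
proof -
  let ?G = "{(a, b). a < m1 \<and> b < m2 \<and> snd (dec K (rx_out K enc K a b)) = b}"
  let ?Y = "(\<lambda>(a, b). rx_out K enc K a b) ` ({..<m1} \<times> {..<m2})"
  let ?h = "\<lambda>(a, b). (a, rx_out K enc K a b)"
  have "inj_on ?h ?G"
    by (rule inj_on_inverseI[where g = "\<lambda>(a, y). (a, snd (dec K y))"]) auto
  then have "card ?G = card (?h ` ?G)" by (rule card_image[symmetric])
  also have "\<dots> \<le> card ({..<m1} \<times> ?Y)"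
    by (intro card_mono) auto
  also have "\<dots> \<le> m1 * prod (blk_alph C n) (W K K)"
    using card_rx_out_image_le[OF assms] by (simp add: card_cartesian_product)
  finally show ?thesis .
qed

lemma error_prob_ge:
  assumes G: "G \<subseteq> {..<m1} \<times> {..<m2}" "card G \<le> g"
    and errors: "\<forall>a<m1. \<forall>b<m2. (a, b) \<notin> G \<longrightarrow> error_event K enc dec a b"
    and m: "0 < m1" "0 < m2"
  shows "1 - real g / (real m1 * real m2) \<le> error_prob K m1 m2 enc dec"
proof -
  let ?E = "{(a, b). a < m1 \<and> b < m2 \<and> error_event K enc dec a b}"
  have "{..<m1} \<times> {..<m2} \<subseteq> G \<union> ?E" using errors by auto
  moreover have "finite ?E" by (rule finite_subset[of _ "{..<m1} \<times> {..<m2}"]) auto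
  ultimately have "card ({..<m1} \<times> {..<m2}) \<le> card (G \<union> ?E)"
    using finite_subset[OF G(1)] by (intro card_mono) auto
  also have "\<dots> \<le> g + card ?E" using card_Un_le[of G ?E] G(2) by linarith
  finally have "real m1 * real m2 \<le> real g + real (card ?E)"
    by (simp add: card_cartesian_product flip: of_nat_mult of_nat_add)
  moreover have p: "0 < real m1 * real m2" using m by simp
  ultimately have "(real m1 * real m2 - real g) / (real m1 * real m2)
      \<le> real (card ?E) / (real m1 * real m2)"
    by (intro divide_right_mono) simp_all
  moreover have "1 - real g / (real m1 * real m2) = (real m1 * real m2 - real g) / (real m1 * real m2)"
    using m by (simp add: diff_divide_distrib)
  ultimately show ?thesis unfolding error_prob_def by simp
qed

lemma nonneg_if_error_prob_bound:
  fixes Pe :: "nat \<Rightarrow> real"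
  assumes "Pe \<longlonglongrightarrow> 0" "\<And>n. 1 - 2 powr (real n * d) \<le> Pe n"
  shows "0 \<le> d"
proof (rule ccontr)
  assume "\<not> 0 \<le> d"
  then have "(\<lambda>n. 1 - 2 powr (real n * d)) \<longlonglongrightarrow> 1 - 0"
    by (intro tendsto_diff tendsto_const tendsto_2_powr_neg) simp
  then have "1 - 0 \<le> (0 :: real)"
    using assms by (intro LIMSEQ_le) auto
  then show False by simp
qed

lemma achievable_le_if_error_prob_ge:
  assumes "achievable K C (R1, R2)"
    and bound: "\<And>n enc dec. valid_encoder K C n (msg_size n R1) (msg_size n R2) enc \<Longrightarrow>
      1 - 2 powr (real n * (c - R)) \<le> error_prob K (msg_size n R1) (msg_size n R2) enc dec"
  shows "R \<le> c"
proof -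
  obtain Pe where Pe: "Pe \<longlonglongrightarrow> 0" and codes: "\<And>n. \<exists>enc dec.
      valid_encoder K C n (msg_size n R1) (msg_size n R2) enc \<and>
      error_prob K (msg_size n R1) (msg_size n R2) enc dec \<le> Pe n"
    using assms(1) unfolding achievable_def by auto
  have "1 - 2 powr (real n * (c - R)) \<le> Pe n" for n
  proof -
    obtain enc dec where "valid_encoder K C n (msg_size n R1) (msg_size n R2) enc"
      and "error_prob K (msg_size n R1) (msg_size n R2) enc dec \<le> Pe n"
      using codes[of n] by blast
    then show ?thesis using bound[of n enc dec] by linarith
  qed
  then show ?thesis using nonneg_if_error_prob_bound[OF Pe] by fastforce
qed

lemma achievable_common_rate_le:
  assumes C: "\<forall>S\<in>links K. 0 \<le> C S \<and> 2 powr C S \<in> \<nat>" and "achievable K C (R1, R2)"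
  shows "R2 \<le> capW C (W K K)"
proof (rule achievable_le_if_error_prob_ge[OF assms(2)])
  fix n enc dec assume valid: "valid_encoder K C n (msg_size n R1) (msg_size n R2) enc"
  have "real (msg_size n R1 * prod (blk_alph C n) (W K K)) / (real (msg_size n R1) * real (msg_size n R2))
      = 2 powr (real n * capW C (W K K)) / real (msg_size n R2)"
    unfolding of_nat_mult real_prod_blk_alph[OF C W_subset_links] using msg_size_pos[of n R1] by simp
  also have "\<dots> \<le> 2 powr (real n * capW C (W K K)) / 2 powr (real n * R2)"
    using msg_size_pos[of n R2] by (intro divide_left_mono msg_size_ge) (simp_all add: zero_less_mult_iff)
  also have "\<dots> = 2 powr (real n * (capW C (W K K) - R2))" by (rule powr_2_ratio)
  finally have bound: "real (msg_size n R1 * prod (blk_alph C n) (W K K)) /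
      (real (msg_size n R1) * real (msg_size n R2)) \<le> 2 powr (real n * (capW C (W K K) - R2))" .
  have "1 - real (msg_size n R1 * prod (blk_alph C n) (W K K)) / (real (msg_size n R1) * real (msg_size n R2))
      \<le> error_prob K (msg_size n R1) (msg_size n R2) enc dec"
    by (rule error_prob_ge[OF _ card_common_decoded_le[OF valid]]) (auto simp: error_event_def msg_size_pos)
  then show "1 - 2 powr (real n * (capW C (W K K) - R2)) \<le> error_prob K (msg_size n R1) (msg_size n R2) enc dec"
    using bound by linarith
qed

lemma achievable_sum_rate_le:
  assumes C: "\<forall>S\<in>links K. 0 \<le> C S \<and> 2 powr C S \<in> \<nat>" and "achievable K C (R1, R2)"
    and j: "j \<in> {1..<K}"
  shows "R2 + R1 \<le> capW C (W K j)"
proof (rule achievable_le_if_error_prob_ge[OF assms(2)])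
  fix n enc dec assume valid: "valid_encoder K C n (msg_size n R1) (msg_size n R2) enc"
  have "real (prod (blk_alph C n) (W K j)) / (real (msg_size n R1) * real (msg_size n R2))
      \<le> 2 powr (real n * capW C (W K j)) / (2 powr (real n * R1) * 2 powr (real n * R2))"
    unfolding real_prod_blk_alph[OF C W_subset_links]
    by (intro divide_left_mono mult_mono msg_size_ge) (simp_all add: msg_size_pos zero_less_mult_iff)
  also have "\<dots> = 2 powr (real n * capW C (W K j)) / 2 powr (real n * (R2 + R1))"
    by (simp add: distrib_left powr_add mult.commute)
  also have "\<dots> = 2 powr (real n * (capW C (W K j) - (R2 + R1)))"
    by (rule powr_2_ratio)
  finally have bound: "real (prod (blk_alph C n) (W K j)) / (real (msg_size n R1) * real (msg_size n R2))
      \<le> 2 powr (real n * (capW C (W K j) - (R2 + R1)))" .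
  have "1 - real (prod (blk_alph C n) (W K j)) / (real (msg_size n R1) * real (msg_size n R2))
      \<le> error_prob K (msg_size n R1) (msg_size n R2) enc dec"
  proof (rule error_prob_ge[OF _ card_decoded_le[OF valid]])
    show "\<forall>a<msg_size n R1. \<forall>b<msg_size n R2. (a, b) \<notin> {(a, b). a < msg_size n R1 \<and> b < msg_size n R2 \<and>
        dec j (rx_out K enc j a b) = (a, b)} \<longrightarrow> error_event K enc dec a b"
      using j unfolding error_event_def by blast
  qed (auto simp: msg_size_pos)
  then show "1 - 2 powr (real n * (capW C (W K j) - (R2 + R1)))
      \<le> error_prob K (msg_size n R1) (msg_size n R2) enc dec"
    using bound by linarith
qed

lemma closed_rate_polygon:
  fixes a :: real and b :: "'j \<Rightarrow> real"
  shows "closed {(x, y). 0 \<le> x \<and> 0 \<le> y \<and> y \<le> a \<and> (\<forall>j\<in>J. y + x \<le> b j)}"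
proof -
  have "{(x, y). 0 \<le> x \<and> 0 \<le> y \<and> y \<le> a \<and> (\<forall>j\<in>J. y + x \<le> b j)} =
      {p. 0 \<le> fst p} \<inter> {p. 0 \<le> snd p} \<inter> {p. snd p \<le> a} \<inter> (\<Inter>j\<in>J. {p. snd p + fst p \<le> b j})"
    by auto
  then show ?thesis
    by (simp only:) (intro closed_Int closed_INT ballI closed_Collect_le continuous_intros)
qed

theorem proposition2:
  fixes K :: nat and C :: "nat set \<Rightarrow> real"
  assumes "K \<ge> 2"
    and "\<forall>S\<in>links K. C S \<ge> 0 \<and> 2 powr C S \<in> \<nat>"
  shows "capacity_region K C =
    {(RKbar, RK). RKbar \<ge> 0 \<and> RK \<ge> 0 \<and> RK \<le> capW C (W K K) \<and>
       (\<forall>j\<in>{1..<K}. RK + RKbar \<le> capW C (W K j))}"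
    (is "_ = ?region")
proof -
  have "{R. achievable K C R} \<subseteq> ?region"
  proof (rule subsetI)
    fix R assume "R \<in> {R. achievable K C R}"
    then have R: "achievable K C (fst R, snd R)" by simp
    then show "R \<in> ?region"
      using achievable_common_rate_le[OF assms(2) R] achievable_sum_rate_le[OF assms(2) R]
      unfolding achievable_def by (cases R) auto
  qed
  moreover have "?region \<subseteq> closure {R. achievable K C R}"
  proof (rule subsetI)
    fix R assume "R \<in> ?region"
    then show "R \<in> closure {R. achievable K C R}"
      by (cases R) (auto intro!: mem_closure_if_scaled_mem achievable_scaled[OF assms])
  qed
  ultimately show ?thesis
    unfolding capacity_region_def by (intro antisym closure_minimal closed_rate_polygon)
qed

end
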